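(* Let $n\geq2$, $R_m,k>0$, $0\leq\alpha\leq1$. Let $\Omega\subset\mathbb{R}^n$ be a bounded Lipschitz domain of diameter at most $R_m$ whose complement is connected. Consider a source $\chi_\Omega\varphi$ with $\varphi\in C^\alpha(\overline\Omega)$. If the source is radiationless at wavenumber $k$, then there exists a positive constant $C$, depending only on $k,R_m,n$, such that \[ \big(\operatorname{diam}(\Omega)\big)^\alpha\geq C\,\frac{\sup_{\partial\Omega}|\varphi|}{\|\varphi\|_{C^\alpha(\overline\Omega)}}. \]
   Context: Source scattering: for $f=\chi_\Omega\varphi$ and $k>0$, let $u\in H^2_{loc}(\mathbb{R}^n)$ be the unique solution of $(\Delta+k^2)u=f$ satisfying the Sommerfeld radiation condition $\lim_{r\to\infty}r^{(n-1)/2}(\partial_r-ik)u=0$. Its far-field pattern is $u_\infty(\hat x)=C_{n,k}\int e^{-ik\hat x\cdot y}f(y)\,dy$, $\hat x\in\mathbb{S}^{n-1}$, with $C_{n,k}\neq0$ explicit (the leading coefficient in $u(x)\sim\frac{e^{ik|x|}}{|x|^{(n-1)/2}}u_\infty(x/|x|)$). The source is radiationless if $u_\infty\equiv0$. Standing assumption: bounded domains satisfy $H^2_0(\Omega)=\{u|_\Omega: u\in H^2(\mathbb{R}^n),\ u=0 \text{ in } \mathbb{R}^n\setminus\overline\Omega\}$. *)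

theory Defs
  imports "HOL-Analysis.Analysis"
begin

definition hproj :: "'a::euclidean_space \<Rightarrow> 'a \<Rightarrow> 'a" where
  "hproj nu v = v - (v \<bullet> nu) *\<^sub>R nu"

definition lipschitz_domain :: "'a::euclidean_space set \<Rightarrow> bool" where
  "lipschitz_domain \<Omega> \<longleftrightarrow> open \<Omega> \<and> connected \<Omega> \<and> \<Omega> \<noteq> {} \<and> bounded \<Omega> \<and>
    (\<forall>p\<in>frontier \<Omega>. \<exists>nu r h L g.
        norm nu = 1 \<and> r > 0 \<and> h > 0 \<and>
        L-lipschitz_on {y. y \<bullet> nu = 0} (g :: 'a \<Rightarrow> real) \<and> g 0 = 0 \<and>
        (let Cyl = {x. norm (hproj nu (x - p)) < r \<and> \<bar>(x - p) \<bullet> nu\<bar> < h}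
         in \<Omega> \<inter> Cyl = {x \<in> Cyl. (x - p) \<bullet> nu > g (hproj nu (x - p))}))"

definition holder_space :: "real \<Rightarrow> 'a::euclidean_space set \<Rightarrow> ('a \<Rightarrow> complex) set" where
  "holder_space \<alpha> S = {\<phi>. continuous_on S \<phi> \<and> bounded (\<phi> ` S) \<and>
      (\<exists>M. \<forall>x\<in>S. \<forall>y\<in>S. x \<noteq> y \<longrightarrow> cmod (\<phi> x - \<phi> y) \<le> M * dist x y powr \<alpha>)}"

definition holder_norm :: "real \<Rightarrow> 'a::euclidean_space set \<Rightarrow> ('a \<Rightarrow> complex) \<Rightarrow> real" where
  "holder_norm \<alpha> S \<phi> = (SUP x\<in>S. cmod (\<phi> x)) +
      (SUP xy\<in>{(x, y). x \<in> S \<and> y \<in> S \<and> x \<noteq> y}.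
         cmod (\<phi> (fst xy) - \<phi> (snd xy)) / dist (fst xy) (snd xy) powr \<alpha>)"

text \<open>Radiationless source chi_Omega phi at wavenumber k: the far-field pattern
  u_inf(xhat) = C_{n,k} * integral e^{-i k xhat.y} f(y) dy vanishes on the unit sphere.
  Since C_{n,k} <> 0 this is the vanishing of the integral.\<close>
definition radiationless :: "real \<Rightarrow> 'a::euclidean_space set \<Rightarrow> ('a \<Rightarrow> complex) \<Rightarrow> bool" where
  "radiationless k \<Omega> \<phi> \<longleftrightarrow>
     (\<forall>xh. norm xh = 1 \<longrightarrow>
        integral \<Omega> (\<lambda>y. exp (- \<i> * complex_of_real (k * (xh \<bullet> y))) * \<phi> y) = 0)"

end

theory Submission
  imports Defs
begin

text \<open>A single far-field direction \<open>\<xi>\<close> already suffices. If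
  \<open>\<integral>\<^sub>\<Omega> exp(-i k \<xi>\<cdot>y) \<phi>(y) dy = 0\<close>, then for every boundary point p
  \<open>|\<Omega>| \<phi>(p) = \<integral>\<^sub>\<Omega> (\<phi>(p) - exp(i k \<xi>\<cdot>(p - y)) \<phi>(y)) dy\<close>.
  As \<open>|exp(i t) - 1| \<le> |t|\<close>, the integrand is bounded by \<open>[\<phi>]\<^sub>\<alpha> d\<^sup>\<alpha> + k d sup |\<phi>|\<close>
  with \<open>d = diam \<Omega>\<close>, and \<open>d \<le> max 1 R\<^sub>m d\<^sup>\<alpha>\<close> turns this into the claim with
  \<open>C = 1 / (1 + k max 1 R\<^sub>m)\<close>.\<close>

lemma norm_exp_i_minus_one_le: "cmod (exp (\<i> * complex_of_real t) - 1) \<le> \<bar>t\<bar>"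
proof -
  have "(cmod (exp (\<i> * complex_of_real t) - 1))\<^sup>2 = (cos t - 1)\<^sup>2 + (sin t)\<^sup>2"
    by (simp add: exp_Euler cmod_power2 cos_of_real sin_of_real)
  also have "\<dots> = 2 - 2 * cos t"
    by (simp add: power2_eq_square algebra_simps)
  also have "\<dots> = 4 * (sin (t / 2))\<^sup>2"
    using cos_double_sin[of "t / 2"] by simp
  also have "\<dots> \<le> 4 * (t / 2)\<^sup>2"
    using abs_sin_x_le_abs_x[of "t / 2"] abs_le_square_iff by (metis mult_left_mono zero_le_numeral)
  also have "\<dots> = \<bar>t\<bar>\<^sup>2"
    by (simp add: power2_eq_square)
  finally show ?thesis
    by (rule power2_le_imp_le) simp
qed

lemma measure_lebesgue_open_pos:
  assumes "open S" "bounded S" "S \<noteq> {}"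
  shows "0 < measure lebesgue S"
  using open_not_negligible[OF assms(1,3)] negligible_iff_measure0[OF lmeasurable_open[OF assms(2,1)]]
  by (simp add: order_less_le)

lemma integrable_on_bounded_continuous:
  fixes f :: "'a::euclidean_space \<Rightarrow> 'b::euclidean_space"
  assumes "S \<in> lmeasurable" "continuous_on S f" "\<And>x. x \<in> S \<Longrightarrow> norm (f x) \<le> B"
  shows "f integrable_on S"
proof (rule measurable_bounded_by_integrable_imp_integrable)
  show "f \<in> borel_measurable (lebesgue_on S)"
    using assms(1,2) continuous_imp_measurable_on_sets_lebesgue fmeasurableD by blast
qed (use assms integrable_on_const fmeasurableD in auto)

lemma norm_le_if_integral_eq_zero:
  fixes g :: "'a::euclidean_space \<Rightarrow> 'b::euclidean_space"
  assumes S: "S \<in> lmeasurable" "0 < measure lebesgue S"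
    and g: "g integrable_on S" "integral S g = 0"
    and bound: "\<And>y. y \<in> S \<Longrightarrow> norm (c - g y) \<le> B"
  shows "norm c \<le> B"
proof -
  have one: "((\<lambda>_. 1::real) has_integral measure lebesgue S) S"
    using S(1) by (simp add: lmeasure_integral integrable_integral integrable_on_const)
  have const: "integral S (\<lambda>_. a) = measure lebesgue S *\<^sub>R a" for a :: 'b
    using has_integral_scaleR_left[OF one, of a] by (simp add: integral_unique)
  have "integral S (\<lambda>y. c - g y) = measure lebesgue S *\<^sub>R c"
    using integral_diff[OF integrable_on_const[OF S(1)] g(1)] g(2) const by simp
  then have "measure lebesgue S * norm c = norm (integral S (\<lambda>y. c - g y))"
    using S(2) by simp
  also have "\<dots> \<le> integral S (\<lambda>_. B)"
    by (intro integral_norm_bound_integral integrable_diff integrable_on_const S(1) g(1) bound)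
  also have "\<dots> = measure lebesgue S * B"
    using has_integral_scaleR_left[OF one, of B] by (simp add: integral_unique)
  finally show ?thesis
    using S(2) by simp
qed

lemma norm_le_if_fourier_transform_vanishes:
  fixes \<phi> :: "'a::euclidean_space \<Rightarrow> complex"
  assumes S: "S \<in> lmeasurable" "0 < measure lebesgue S" and "continuous_on S \<phi>" "norm \<xi> = 1"
    and osc: "\<And>y. y \<in> S \<Longrightarrow> cmod (\<phi> y - \<phi> p) \<le> A"
    and bound: "\<And>y. y \<in> S \<Longrightarrow> cmod (\<phi> y) \<le> B"
    and dist: "\<And>y. y \<in> S \<Longrightarrow> norm (y - p) \<le> d"
    and vanish: "integral S (\<lambda>y. exp (- \<i> * complex_of_real (k * (\<xi> \<bullet> y))) * \<phi> y) = 0"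
  shows "cmod (\<phi> p) \<le> A + \<bar>k\<bar> * d * B"
proof (rule norm_le_if_integral_eq_zero[OF S])
  define e where "e = exp (\<i> * complex_of_real (k * (\<xi> \<bullet> p)))"
  define g where "g y = e * (exp (- \<i> * complex_of_real (k * (\<xi> \<bullet> y))) * \<phi> y)" for y
  show "g integrable_on S"
  proof (rule integrable_on_bounded_continuous[OF S(1)])
    show "continuous_on S g"
      unfolding g_def by (intro continuous_intros assms)
    show "cmod (g y) \<le> B" if "y \<in> S" for y
      using bound[OF that] by (simp add: g_def e_def norm_mult)
  qed
  show "integral S g = 0"
    unfolding g_def Henstock_Kurzweil_Integration.integral_mult_right vanish by simp
  show "cmod (\<phi> p - g y) \<le> A + \<bar>k\<bar> * d * B" if y: "y \<in> S" for y
  proof -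
    define t where "t = k * (\<xi> \<bullet> (p - y))"
    have "g y = exp (\<i> * complex_of_real t) * \<phi> y"
      unfolding g_def e_def t_def by (simp add: exp_add[symmetric] algebra_simps inner_diff_right)
    then have "\<phi> p - g y = (\<phi> p - \<phi> y) - (exp (\<i> * complex_of_real t) - 1) * \<phi> y"
      by (simp add: algebra_simps)
    then have "cmod (\<phi> p - g y) \<le> cmod (\<phi> y - \<phi> p) + cmod (exp (\<i> * complex_of_real t) - 1) * cmod (\<phi> y)"
      by (metis norm_minus_commute norm_mult norm_triangle_ineq4)
    also have "\<dots> \<le> A + \<bar>k\<bar> * d * B"
    proof (intro add_mono mult_mono osc y bound)
      have "\<bar>t\<bar> \<le> \<bar>k\<bar> * (norm \<xi> * norm (y - p))"
        using Cauchy_Schwarz_ineq2[of \<xi> "p - y"]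
        by (simp add: t_def abs_mult mult_left_mono norm_minus_commute)
      also have "\<dots> \<le> \<bar>k\<bar> * d"
        using dist[OF y] \<open>norm \<xi> = 1\<close> by (simp add: mult_left_mono)
      finally show "cmod (exp (\<i> * complex_of_real t) - 1) \<le> \<bar>k\<bar> * d"
        using norm_exp_i_minus_one_le order_trans by blast
      have "0 \<le> d"
        using dist[OF y] norm_ge_zero order_trans by blast
      then show "0 \<le> \<bar>k\<bar> * d"
        by simp
    qed simp
    finally show ?thesis .
  qed
qed

definition holder_seminorm :: "real \<Rightarrow> 'a::euclidean_space set \<Rightarrow> ('a \<Rightarrow> complex) \<Rightarrow> real" where
  "holder_seminorm \<alpha> S \<phi> = (SUP xy\<in>{(x, y). x \<in> S \<and> y \<in> S \<and> x \<noteq> y}.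
     cmod (\<phi> (fst xy) - \<phi> (snd xy)) / dist (fst xy) (snd xy) powr \<alpha>)"

lemma holder_norm_eq: "holder_norm \<alpha> S \<phi> = (SUP x\<in>S. cmod (\<phi> x)) + holder_seminorm \<alpha> S \<phi>"
  by (simp add: holder_norm_def holder_seminorm_def)

lemma holder_space_norm_le_Sup:
  assumes "\<phi> \<in> holder_space \<alpha> S" "x \<in> S"
  shows "cmod (\<phi> x) \<le> (SUP x\<in>S. cmod (\<phi> x))"
proof (rule cSUP_upper[OF assms(2)])
  have "bounded (\<phi> ` S)"
    using assms(1) by (simp add: holder_space_def)
  then show "bdd_above ((\<lambda>x. cmod (\<phi> x)) ` S)"
    by (intro bounded_imp_bdd_above) (simp add: bounded_norm_comp)
qed

lemma holder_space_norm_diff_le: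
  assumes "\<phi> \<in> holder_space \<alpha> S" "x \<in> S" "y \<in> S" "x \<noteq> y"
  shows "cmod (\<phi> x - \<phi> y) \<le> holder_seminorm \<alpha> S \<phi> * dist x y powr \<alpha>"
proof -
  define P where "P = {(x, y). x \<in> S \<and> y \<in> S \<and> x \<noteq> y}"
  define q where "q xy = cmod (\<phi> (fst xy) - \<phi> (snd xy)) / dist (fst xy) (snd xy) powr \<alpha>" for xy
  obtain M where M: "\<And>x y. x \<in> S \<Longrightarrow> y \<in> S \<Longrightarrow> x \<noteq> y \<Longrightarrow> cmod (\<phi> x - \<phi> y) \<le> M * dist x y powr \<alpha>"
    using assms(1) unfolding holder_space_def by blast
  have "q xy \<le> M" if "xy \<in> P" for xy
    using that M by (auto simp: P_def q_def divide_le_eq)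
  then have "q (x, y) \<le> holder_seminorm \<alpha> S \<phi>"
    unfolding holder_seminorm_def P_def[symmetric] q_def[symmetric]
    by (intro cSUP_upper bdd_aboveI2) (use assms in \<open>auto simp: P_def\<close>)
  then show ?thesis
    using assms(4) by (simp add: q_def divide_le_eq)
qed

lemma holder_seminorm_nonneg:
  assumes "\<phi> \<in> holder_space \<alpha> S" "x \<in> S" "y \<in> S" "x \<noteq> y"
  shows "0 \<le> holder_seminorm \<alpha> S \<phi>"
proof -
  have "0 \<le> holder_seminorm \<alpha> S \<phi> * dist x y powr \<alpha>"
    using holder_space_norm_diff_le[OF assms] norm_ge_zero order_trans by blast
  then show ?thesis
    using assms(4) by (simp add: zero_le_mult_iff)
qed

lemma le_max_one_mult_powr:
  fixes d R \<alpha> :: real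
  assumes "0 \<le> d" "d \<le> R" "0 \<le> \<alpha>" "\<alpha> \<le> 1"
  shows "d \<le> max 1 R * d powr \<alpha>"
proof (cases "d \<le> 1")
  case True
  then have "d \<le> d powr \<alpha>"
    using assms powr_mono'[of \<alpha> 1 d] by (cases "d = 0") auto
  also have "\<dots> \<le> max 1 R * d powr \<alpha>"
    by (simp add: mult_le_cancel_right1)
  finally show ?thesis .
next
  case False
  then have "1 \<le> d powr \<alpha>"
    using assms(3) ge_one_powr_ge_zero by simp
  then have "max 1 R \<le> max 1 R * d powr \<alpha>"
    by (simp add: mult_le_cancel_left1)
  moreover have "d \<le> max 1 R"
    using assms(2) by simp
  ultimately show ?thesis
    by linarith
qed

lemma radiationless_norm_frontier_le:
  fixes \<Omega> :: "'a::euclidean_space set"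
  assumes \<Omega>: "open \<Omega>" "bounded \<Omega>" "\<Omega> \<noteq> {}" and "0 \<le> \<alpha>"
    and \<phi>: "\<phi> \<in> holder_space \<alpha> (closure \<Omega>)" and "radiationless k \<Omega> \<phi>"
    and p: "p \<in> frontier \<Omega>"
  shows "cmod (\<phi> p) \<le> holder_seminorm \<alpha> (closure \<Omega>) \<phi> * diameter \<Omega> powr \<alpha>
    + \<bar>k\<bar> * diameter \<Omega> * (SUP x\<in>closure \<Omega>. cmod (\<phi> x))"
proof -
  obtain b :: 'a where "b \<in> Basis"
    using nonempty_Basis by blast
  then have b: "norm b = 1" "integral \<Omega> (\<lambda>y. exp (- \<i> * complex_of_real (k * (b \<bullet> y))) * \<phi> y) = 0"
    using \<open>radiationless k \<Omega> \<phi>\<close> by (auto simp: radiationless_def)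
  have p_closure: "p \<in> closure \<Omega>" and "p \<notin> \<Omega>"
    using p \<Omega>(1) by (auto simp: frontier_def interior_open)
  have dist_le: "norm (y - p) \<le> diameter \<Omega>" if "y \<in> \<Omega>" for y
    using diameter_bounded_bound[of "closure \<Omega>" y p] that p_closure closure_subset \<Omega>(2)
    by (auto simp: diameter_closure dist_norm)
  have osc: "cmod (\<phi> y - \<phi> p) \<le> holder_seminorm \<alpha> (closure \<Omega>) \<phi> * diameter \<Omega> powr \<alpha>"
    if y: "y \<in> \<Omega>" for y
  proof -
    have y_closure: "y \<in> closure \<Omega>" and "y \<noteq> p"
      using y \<open>p \<notin> \<Omega>\<close> closure_subset by auto
    then have "cmod (\<phi> y - \<phi> p) \<le> holder_seminorm \<alpha> (closure \<Omega>) \<phi> * dist y p powr \<alpha>"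
      using holder_space_norm_diff_le[OF \<phi> _ p_closure] by blast
    also have "\<dots> \<le> holder_seminorm \<alpha> (closure \<Omega>) \<phi> * diameter \<Omega> powr \<alpha>"
      using holder_seminorm_nonneg[OF \<phi> y_closure p_closure \<open>y \<noteq> p\<close>] dist_le[OF y] \<open>0 \<le> \<alpha>\<close>
      by (intro mult_left_mono powr_mono2) (auto simp: dist_norm)
    finally show ?thesis .
  qed
  have bound: "cmod (\<phi> y) \<le> (SUP x\<in>closure \<Omega>. cmod (\<phi> x))" if "y \<in> \<Omega>" for y
    using holder_space_norm_le_Sup[OF \<phi>] that closure_subset by blast
  have "continuous_on \<Omega> \<phi>"
    using \<phi> continuous_on_subset[OF _ closure_subset] unfolding holder_space_def by blast
  with \<Omega> show ?thesis
    by (intro norm_le_if_fourier_transform_vanishes[OF _ _ _ b(1) osc bound dist_le b(2)]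
        lmeasurable_open measure_lebesgue_open_pos)
qed

lemma radiationless_Sup_frontier_le:
  fixes \<Omega> :: "'a::euclidean_space set"
  assumes \<Omega>: "open \<Omega>" "bounded \<Omega>" "\<Omega> \<noteq> {}" "diameter \<Omega> \<le> R" and \<alpha>: "0 \<le> \<alpha>" "\<alpha> \<le> 1"
    and \<phi>: "\<phi> \<in> holder_space \<alpha> (closure \<Omega>)" and rad: "radiationless k \<Omega> \<phi>"
  shows "(SUP x\<in>frontier \<Omega>. cmod (\<phi> x)) / holder_norm \<alpha> (closure \<Omega>) \<phi>
    \<le> (1 + \<bar>k\<bar> * max 1 R) * diameter \<Omega> powr \<alpha>"
proof -
  define d where "d = diameter \<Omega>"
  define S where "S = (SUP x\<in>closure \<Omega>. cmod (\<phi> x))"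
  define H where "H = holder_seminorm \<alpha> (closure \<Omega>) \<phi>"
  have "frontier \<Omega> \<noteq> {}"
    using frontier_not_empty \<Omega>(2,3) not_bounded_UNIV by blast
  then obtain p where p: "p \<in> frontier \<Omega>"
    by blast
  obtain y where y: "y \<in> \<Omega>"
    using \<Omega>(3) by blast
  have "p \<in> closure \<Omega>" "y \<in> closure \<Omega>" "y \<noteq> p"
    using p y \<Omega>(1) closure_subset by (auto simp: frontier_def interior_open)
  then have H: "0 \<le> H" and S: "0 \<le> S"
    using holder_seminorm_nonneg[OF \<phi>] holder_space_norm_le_Sup[OF \<phi>] norm_ge_zero order_trans
    unfolding H_def S_def by blast+
  have "cmod (\<phi> x) \<le> (1 + \<bar>k\<bar> * max 1 R) * d powr \<alpha> * (S + H)" if "x \<in> frontier \<Omega>" for x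
  proof -
    have "cmod (\<phi> x) \<le> H * d powr \<alpha> + \<bar>k\<bar> * d * S"
      using radiationless_norm_frontier_le[OF \<Omega>(1-3) \<alpha>(1) \<phi> rad that] by (simp add: d_def H_def S_def)
    also have "\<dots> \<le> H * d powr \<alpha> + \<bar>k\<bar> * (max 1 R * d powr \<alpha>) * S"
      using le_max_one_mult_powr[OF diameter_ge_0[OF \<Omega>(2)] \<Omega>(4) \<alpha>] S
      by (intro add_left_mono mult_right_mono mult_left_mono) (auto simp: d_def)
    also have "\<dots> \<le> (1 + \<bar>k\<bar> * max 1 R) * d powr \<alpha> * (S + H)"
      using H S by (simp add: algebra_simps add_increasing mult_nonneg_nonneg)
    finally show ?thesis .
  qed
  then have "(SUP x\<in>frontier \<Omega>. cmod (\<phi> x)) \<le> (1 + \<bar>k\<bar> * max 1 R) * d powr \<alpha> * (S + H)"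
    using \<open>frontier \<Omega> \<noteq> {}\<close> by (intro cSUP_least) auto
  moreover have "holder_norm \<alpha> (closure \<Omega>) \<phi> = S + H"
    by (simp add: holder_norm_eq S_def H_def)
  ultimately show ?thesis
    using H S by (cases "S + H = 0") (auto simp: d_def divide_le_eq)
qed

theorem corollary2p2:
  fixes k Rm :: real
  assumes "CARD('n::finite) \<ge> 2" and "k > 0" and "Rm > 0"
  shows "\<exists>C>0. \<forall>(\<alpha>::real) (\<Omega>::(real^'n) set) (\<phi>::real^'n \<Rightarrow> complex).
           0 \<le> \<alpha> \<and> \<alpha> \<le> 1 \<and> lipschitz_domain \<Omega> \<and> diameter \<Omega> \<le> Rm \<and>
           connected (- closure \<Omega>) \<and> \<phi> \<in> holder_space \<alpha> (closure \<Omega>) \<and>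
           radiationless k \<Omega> \<phi> \<longrightarrow>
           diameter \<Omega> powr \<alpha> \<ge>
             C * (SUP x\<in>frontier \<Omega>. cmod (\<phi> x)) / holder_norm \<alpha> (closure \<Omega>) \<phi>"
proof -
  define K where "K = 1 + k * max 1 Rm"
  have "0 < K"
    using \<open>k > 0\<close> by (simp add: K_def add_pos_nonneg)
  show ?thesis
  proof (intro exI[of _ "1 / K"] conjI allI impI)
    show "0 < 1 / K"
      using \<open>0 < K\<close> by simp
    fix \<alpha> :: real and \<Omega> :: "(real^'n) set" and \<phi> :: "real^'n \<Rightarrow> complex"
    assume "0 \<le> \<alpha> \<and> \<alpha> \<le> 1 \<and> lipschitz_domain \<Omega> \<and> diameter \<Omega> \<le> Rm \<and>
      connected (- closure \<Omega>) \<and> \<phi> \<in> holder_space \<alpha> (closure \<Omega>) \<and> radiationless k \<Omega> \<phi>"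
    then have "(SUP x\<in>frontier \<Omega>. cmod (\<phi> x)) / holder_norm \<alpha> (closure \<Omega>) \<phi> \<le> K * diameter \<Omega> powr \<alpha>"
      using radiationless_Sup_frontier_le[of \<Omega> Rm \<alpha> \<phi> k] \<open>k > 0\<close>
      by (auto simp: lipschitz_domain_def K_def)
    then have "(SUP x\<in>frontier \<Omega>. cmod (\<phi> x)) / holder_norm \<alpha> (closure \<Omega>) \<phi> / K \<le> diameter \<Omega> powr \<alpha>"
      using \<open>0 < K\<close> by (subst pos_divide_le_eq) (simp_all add: mult.commute)
    then show "1 / K * (SUP x\<in>frontier \<Omega>. cmod (\<phi> x)) / holder_norm \<alpha> (closure \<Omega>) \<phi>
        \<le> diameter \<Omega> powr \<alpha>"
      by (simp add: mult.commute)
  qed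
qed

end
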